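(* Consider a one-site PTM cascade with $n=1$ layer, with rate constants and $\overline{E},\overline{F}>0$ fixed, and let $T=c^1\overline{F}-c^0\overline{E}$. Consider the BMSS values of $S^1$ and $S^0$ as functions of $\overline{S}\in(0,\infty)$. Then both are strictly increasing in $\overline{S}$, and as $\overline{S}\to+\infty$: (i) if $T<0$, then $S^1\to+\infty$ and $S^0\to-\lambda\overline{F}/\Delta\in(0,\infty)$; (ii) if $T>0$, then $S^1\to\overline{E}/\Delta$ and $S^0\to+\infty$; (iii) if $T=0$, then both $S^1\to+\infty$ and $S^0\to+\infty$; where $\Delta=\gamma\overline{F}-\delta\overline{E}=(\delta/c^0)T$.
   Context: For $n=1$ the one-site PTM cascade has species $E,S^0,S^1,F,Y^0,Y^1$ with reactions $E+S^0\rightleftharpoons Y^0\to E+S^1$ (rate constants $a^0$ forward, $b^0$ backward, $c^0$ catalytic) and $F+S^1\rightleftharpoons Y^1\to F+S^0$ (rate constants $a^1,b^1,c^1$), all positive, mass-action kinetics. Put $\delta=a^1/(b^1+c^1)$, $\gamma=(c^1/c^0)\delta$, $\lambda=\frac{b^0+c^0}{a^0}\gamma$. A steady state for total amounts $\overline{E},\overline{F},\overline{S}$ is a real solution of $Y^0=\gamma FS^1$, $Y^1=\delta FS^1$, $\lambda FS^1=S^0E$, $\overline{F}=F+Y^1$, $\overline{E}=E+Y^0$, $\overline{S}=S^0+S^1+Y^0+Y^1$. A BMSS is a steady state with positive total amounts and all concentrations nonnegative; for positive total amounts it exists and is unique. *)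

theory Defs
  imports Complex_Main
begin

text \<open>One-site PTM cascade (n = 1). Rate constants a0 b0 c0 (for E + S0 <-> Y0 -> E + S1)
  and a1 b1 c1 (for F + S1 <-> Y1 -> F + S0).\<close>

definition ptm_delta :: "real \<Rightarrow> real \<Rightarrow> real \<Rightarrow> real" where
  "ptm_delta a1 b1 c1 = a1 / (b1 + c1)"

definition ptm_gamma :: "real \<Rightarrow> real \<Rightarrow> real \<Rightarrow> real \<Rightarrow> real" where
  "ptm_gamma c0 a1 b1 c1 = (c1 / c0) * ptm_delta a1 b1 c1"

definition ptm_lambda :: "real \<Rightarrow> real \<Rightarrow> real \<Rightarrow> real \<Rightarrow> real \<Rightarrow> real \<Rightarrow> real" where
  "ptm_lambda a0 b0 c0 a1 b1 c1 = ((b0 + c0) / a0) * ptm_gamma c0 a1 b1 c1"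

definition ptm_steady_state ::
  "real \<Rightarrow> real \<Rightarrow> real \<Rightarrow> real \<Rightarrow> real \<Rightarrow> real \<Rightarrow> real \<Rightarrow> real \<Rightarrow> real \<Rightarrow>
   real \<Rightarrow> real \<Rightarrow> real \<Rightarrow> real \<Rightarrow> real \<Rightarrow> real \<Rightarrow> bool" where
  "ptm_steady_state a0 b0 c0 a1 b1 c1 Eb Fb Sb E S0 S1 F Y0 Y1 \<longleftrightarrow>
     Y0 = ptm_gamma c0 a1 b1 c1 * F * S1 \<and>
     Y1 = ptm_delta a1 b1 c1 * F * S1 \<and>
     ptm_lambda a0 b0 c0 a1 b1 c1 * F * S1 = S0 * E \<and>
     Fb = F + Y1 \<and> Eb = E + Y0 \<and> Sb = S0 + S1 + Y0 + Y1"

definition ptm_BMSS ::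
  "real \<Rightarrow> real \<Rightarrow> real \<Rightarrow> real \<Rightarrow> real \<Rightarrow> real \<Rightarrow> real \<Rightarrow> real \<Rightarrow> real \<Rightarrow>
   real \<Rightarrow> real \<Rightarrow> real \<Rightarrow> real \<Rightarrow> real \<Rightarrow> real \<Rightarrow> bool" where
  "ptm_BMSS a0 b0 c0 a1 b1 c1 Eb Fb Sb E S0 S1 F Y0 Y1 \<longleftrightarrow>
     Eb > 0 \<and> Fb > 0 \<and> Sb > 0 \<and>
     ptm_steady_state a0 b0 c0 a1 b1 c1 Eb Fb Sb E S0 S1 F Y0 Y1 \<and>
     E \<ge> 0 \<and> S0 \<ge> 0 \<and> S1 \<ge> 0 \<and> F \<ge> 0 \<and> Y0 \<ge> 0 \<and> Y1 \<ge> 0"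

text \<open>The BMSS values of S1 and S0 (the BMSS is unique for positive totals).\<close>
definition bmss_S1 :: "real \<Rightarrow> real \<Rightarrow> real \<Rightarrow> real \<Rightarrow> real \<Rightarrow> real \<Rightarrow> real \<Rightarrow> real \<Rightarrow> real \<Rightarrow> real" where
  "bmss_S1 a0 b0 c0 a1 b1 c1 Eb Fb Sb =
     (THE S1. \<exists>E S0 F Y0 Y1. ptm_BMSS a0 b0 c0 a1 b1 c1 Eb Fb Sb E S0 S1 F Y0 Y1)"

definition bmss_S0 :: "real \<Rightarrow> real \<Rightarrow> real \<Rightarrow> real \<Rightarrow> real \<Rightarrow> real \<Rightarrow> real \<Rightarrow> real \<Rightarrow> real \<Rightarrow> real" where
  "bmss_S0 a0 b0 c0 a1 b1 c1 Eb Fb Sb =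
     (THE S0. \<exists>E S1 F Y0 Y1. ptm_BMSS a0 b0 c0 a1 b1 c1 Eb Fb Sb E S0 S1 F Y0 Y1)"

end

theory Submission
  imports Defs
begin

(* Write d, g, l for the constants delta, gamma, lambda of the model and
   Delta = g Fb - d Eb.  Eliminating F, E, Y0, Y1 from the steady-state equations
   shows that a BMSS is determined by its value x = S1: F = Fb / (1 + d x),
   E (1 + d x) = Eb - Delta x, S0 = conc0 x = l Fb x / (Eb - Delta x), and the
   total substrate is Sb = total x = conc0 x + x + (g + d) Fb x / (1 + d x).
   Nonnegativity of the concentrations amounts to x lying in the admissible set
   adm = {x >= 0. Delta x < Eb}. *)

locale ptm_reduced =
  fixes d g l Eb Fb :: real
  assumes d_pos: "d > 0" and g_pos: "g > 0" and l_pos: "l > 0"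
    and Eb_pos: "Eb > 0" and Fb_pos: "Fb > 0"
begin

text \<open>\<open>Delta\<close> decides whether \<open>S1\<close> is bounded along the branch.\<close>
definition Delta :: real where
  "Delta = g * Fb - d * Eb"

text \<open>Admissible values of \<open>S1\<close>: those for which all concentrations are nonnegative.\<close>
definition adm :: "real set" where
  "adm = {x. 0 \<le> x \<and> Delta * x < Eb}"

definition free_F :: "real \<Rightarrow> real" where
  "free_F x = Fb / (1 + d * x)"

definition free_E :: "real \<Rightarrow> real" where
  "free_E x = Eb - g * free_F x * x"

definition conc0 :: "real \<Rightarrow> real" where
  "conc0 x = l * Fb * x / (Eb - Delta * x)"

definition total :: "real \<Rightarrow> real" where
  "total x = conc0 x + x + (g + d) * Fb * x / (1 + d * x)"

lemma one_plus_d_pos: "0 \<le> x \<Longrightarrow> 1 + d * x > 0"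
  using d_pos by (simp add: add_pos_nonneg)

text \<open>\<open>adm\<close> is an interval starting at \<open>0\<close>; needed to apply the IVT on \<open>[0, X]\<close>.\<close>
lemma adm_downward_closed:
  assumes "0 \<le> x" "x \<le> y" "y \<in> adm"
  shows "x \<in> adm"
proof (cases "Delta \<ge> 0")
  case True
  then have "Delta * x \<le> Delta * y" using assms by (simp add: mult_left_mono)
  then show ?thesis using assms unfolding adm_def by simp
next
  case False
  then have "Delta * x \<le> 0" using assms by (simp add: mult_nonpos_nonneg)
  then show ?thesis using assms Eb_pos unfolding adm_def by simp
qed

lemma free_F_pos: "0 \<le> x \<Longrightarrow> free_F x > 0"
  unfolding free_F_def using one_plus_d_pos Fb_pos by simp

lemma free_F_scaled: "0 \<le> x \<Longrightarrow> free_F x * (1 + d * x) = Fb"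
  unfolding free_F_def using one_plus_d_pos[of x] by simp

lemma free_E_scaled: "0 \<le> x \<Longrightarrow> free_E x * (1 + d * x) = Eb - Delta * x"
  using free_F_scaled[of x] unfolding free_E_def Delta_def by (simp add: algebra_simps)

lemma adm_iff_free_E_pos: "0 \<le> x \<Longrightarrow> x \<in> adm \<longleftrightarrow> free_E x > 0"
proof -
  assume x: "0 \<le> x"
  have "free_E x > 0 \<longleftrightarrow> free_E x * (1 + d * x) > 0"
    using one_plus_d_pos[OF x] by (simp add: zero_less_mult_iff)
  then show ?thesis unfolding free_E_scaled[OF x] using x by (auto simp: adm_def)
qed

text \<open>\<open>conc0\<close> is the value of \<open>S0\<close> forced by \<open>l F S1 = S0 E\<close>; the identity holds even when
  \<open>free_E x = 0\<close>, since both sides are then \<open>0\<close> (division by zero).\<close>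
lemma conc0_free: "0 \<le> x \<Longrightarrow> conc0 x = l * free_F x * x / free_E x"
proof -
  assume x: "0 \<le> x"
  have "conc0 x = l * (free_F x * (1 + d * x)) * x / (free_E x * (1 + d * x))"
    unfolding conc0_def free_E_scaled[OF x] free_F_scaled[OF x] ..
  then show ?thesis using one_plus_d_pos[OF x] by simp
qed

lemma complexes_free: "(g + d) * Fb * x / (1 + d * x) = g * free_F x * x + d * free_F x * x"
proof -
  have "(g + d) * Fb * x / (1 + d * x) = (g + d) * x * free_F x"
    unfolding free_F_def by simp
  then show ?thesis by (simp add: algebra_simps)
qed

lemma adm_denom_pos: "x \<in> adm \<Longrightarrow> Eb - Delta * x > 0"
  unfolding adm_def by simp

lemma conc0_nonneg: "x \<in> adm \<Longrightarrow> conc0 x \<ge> 0"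
  unfolding conc0_def using adm_denom_pos l_pos Fb_pos by (simp add: adm_def)

lemma conc0_strict_mono: "strict_mono_on adm conc0"
proof (rule strict_mono_onI)
  fix x y assume x: "x \<in> adm" and y: "y \<in> adm" and xy: "x < y"
  have px: "Eb - Delta * x > 0" and py: "Eb - Delta * y > 0"
    using x y by (simp_all add: adm_def)
  have "x * (Eb - Delta * y) < y * (Eb - Delta * x)"
    using xy Eb_pos by (simp add: algebra_simps)
  then have "l * Fb * x * (Eb - Delta * y) < l * Fb * y * (Eb - Delta * x)"
    using l_pos Fb_pos by (simp add: mult.assoc)
  then show "conc0 x < conc0 y"
    unfolding conc0_def using px py by (simp add: divide_simps)
qed

lemma saturating_mono: "0 \<le> x \<Longrightarrow> x \<le> y \<Longrightarrow> x / (1 + d * x) \<le> y / (1 + d * y)"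
  using one_plus_d_pos[of x] one_plus_d_pos[of y]
  by (simp add: divide_simps algebra_simps)

lemma saturating_bound: "0 \<le> x \<Longrightarrow> x / (1 + d * x) \<le> 1 / d"
  using one_plus_d_pos[of x] d_pos by (simp add: divide_simps)

text \<open>\<open>total\<close> is strictly increasing on \<open>adm\<close>; this gives uniqueness of the BMSS and
  monotonicity of the branch.\<close>
lemma total_strict_mono: "strict_mono_on adm total"
proof (rule strict_mono_onI)
  fix x y assume x: "x \<in> adm" and y: "y \<in> adm" and xy: "x < y"
  have "x / (1 + d * x) \<le> y / (1 + d * y)"
    using x xy by (intro saturating_mono) (simp_all add: adm_def)
  then have "(g + d) * Fb * (x / (1 + d * x)) \<le> (g + d) * Fb * (y / (1 + d * y))"
    using g_pos d_pos Fb_pos by (intro mult_left_mono) simp_all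
  moreover have "conc0 x < conc0 y"
    using strict_mono_onD[OF conc0_strict_mono x y xy] .
  ultimately show "total x < total y"
    unfolding total_def using xy by simp
qed

lemma total_isCont: "x \<in> adm \<Longrightarrow> isCont total x"
  unfolding total_def[abs_def] conc0_def
  using adm_denom_pos one_plus_d_pos[of x]
  by (intro continuous_intros) (auto simp: adm_def)

lemma total_zero: "total 0 = 0"
  unfolding total_def conc0_def by simp

lemma total_ge: "x \<in> adm \<Longrightarrow> x \<le> total x"
  unfolding total_def using conc0_nonneg g_pos d_pos Fb_pos one_plus_d_pos[of x]
  by (simp add: adm_def)

lemma total_ge_conc0: "x \<in> adm \<Longrightarrow> conc0 x \<le> total x"
  unfolding total_def using g_pos d_pos Fb_pos one_plus_d_pos[of x]
  by (simp add: adm_def)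

text \<open>Every level \<open>Sb > 0\<close> is exceeded by \<open>total\<close> somewhere in \<open>adm\<close>: if
  \<open>Delta \<le> 0\<close> take \<open>Sb\<close> itself, otherwise take the point where \<open>conc0\<close> equals \<open>Sb\<close>.\<close>
lemma total_exceeds:
  assumes "Sb > 0"
  obtains X where "X \<in> adm" "Sb \<le> total X"
proof (cases "Delta \<le> 0")
  case True
  then have "Delta * Sb \<le> 0" using assms by (simp add: mult_nonpos_nonneg)
  then have "Sb \<in> adm" using assms Eb_pos by (simp add: adm_def)
  then show ?thesis using that total_ge by blast
next
  case False
  define X where "X = Sb * Eb / (l * Fb + Sb * Delta)"
  have den: "l * Fb + Sb * Delta > 0"
    using False assms l_pos Fb_pos by (simp add: add_pos_pos)
  have denX: "Eb - Delta * X = Eb * (l * Fb) / (l * Fb + Sb * Delta)"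
    unfolding X_def using den by (simp add: field_simps)
  have "Eb - Delta * X > 0"
    unfolding denX using den Eb_pos l_pos Fb_pos by simp
  moreover have "X \<ge> 0"
    unfolding X_def using den assms Eb_pos by simp
  ultimately have "X \<in> adm" by (simp add: adm_def)
  moreover have "conc0 X = Sb"
  proof -
    have "conc0 X = l * Fb * X / (Eb * (l * Fb) / (l * Fb + Sb * Delta))"
      unfolding conc0_def denX ..
    also have "\<dots> = X * (l * Fb + Sb * Delta) / Eb"
      using den Eb_pos l_pos Fb_pos by (simp add: field_simps)
    finally show ?thesis
      unfolding X_def using den Eb_pos by simp
  qed
  ultimately show ?thesis using that total_ge_conc0 by fastforce
qed

text \<open>Every positive total substrate is attained on \<open>adm\<close> (intermediate value theorem on
  \<open>[0, X]\<close>).\<close>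
lemma total_surj:
  assumes "Sb > 0"
  obtains x where "x \<in> adm" "total x = Sb"
proof -
  obtain X where X: "X \<in> adm" "Sb \<le> total X"
    using total_exceeds assms by blast
  have "\<forall>x. 0 \<le> x \<and> x \<le> X \<longrightarrow> isCont total x"
    using X adm_downward_closed total_isCont by blast
  then obtain x where "0 \<le> x" "x \<le> X" "total x = Sb"
    using IVT[of total 0 Sb X] X assms total_zero by (auto simp: adm_def)
  then show ?thesis using that adm_downward_closed X by blast
qed

lemma conc0_tendsto:
  assumes "Delta < 0"
  shows "(conc0 \<longlongrightarrow> - l * Fb / Delta) at_top"
proof -
  have "((\<lambda>x. l * Fb / (Eb * inverse x - Delta)) \<longlongrightarrow> l * Fb / (Eb * 0 - Delta)) at_top"
    by (intro tendsto_intros tendsto_inverse_0_at_top filterlim_ident) (use assms in auto)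
  moreover have "eventually (\<lambda>x. l * Fb / (Eb * inverse x - Delta) = conc0 x) at_top"
    using eventually_gt_at_top[of 0]
    by eventually_elim (simp add: conc0_def field_simps)
  ultimately show ?thesis by (simp add: tendsto_cong)
qed

end

locale steady_branch = ptm_reduced +
  fixes s1 s0 :: "real \<Rightarrow> real"
  assumes s1_adm: "S > 0 \<Longrightarrow> s1 S \<in> adm"
    and s1_total: "S > 0 \<Longrightarrow> total (s1 S) = S"
    and s0_conc0: "S > 0 \<Longrightarrow> s0 S = conc0 (s1 S)"
begin

text \<open>\<open>s1\<close> inverts the strictly increasing map \<open>total\<close>, hence is strictly increasing.\<close>
lemma s1_strict_mono: "strict_mono_on {0<..} s1"
proof (rule strict_mono_onI)
  fix S S' :: real assume "S \<in> {0<..}" "S' \<in> {0<..}" "S < S'"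
  then show "s1 S < s1 S'"
    using strict_mono_on_less[OF total_strict_mono s1_adm[of S] s1_adm[of S']]
      s1_total[of S] s1_total[of S'] by simp
qed

text \<open>\<open>s0 = conc0 \<circ> s1\<close> is a composition of strictly increasing maps.\<close>
lemma s0_strict_mono: "strict_mono_on {0<..} s0"
proof (rule strict_mono_onI)
  fix S S' :: real assume "S \<in> {0<..}" "S' \<in> {0<..}" "S < S'"
  then show "s0 S < s0 S'"
    using strict_mono_onD[OF conc0_strict_mono s1_adm s1_adm strict_mono_onD[OF s1_strict_mono]]
      s0_conc0 by simp
qed

lemma s1_eventually_above:
  assumes "y \<in> adm"
  shows "eventually (\<lambda>S. y < s1 S) at_top"
  using eventually_gt_at_top[of "max (total y) 0"]
proof eventually_elim
  case (elim S)
  then have "total y < total (s1 S)" using s1_total by simp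
  then show "y < s1 S"
    using strict_mono_on_less[OF total_strict_mono assms s1_adm] elim by simp
qed

text \<open>For \<open>Delta \<le> 0\<close> every \<open>x \<ge> 0\<close> is admissible, so \<open>s1\<close> is unbounded.\<close>
lemma s1_at_top:
  assumes "Delta \<le> 0"
  shows "filterlim s1 at_top at_top"
  unfolding filterlim_at_top_dense
proof
  fix Z :: real
  have "Delta * max Z 0 \<le> 0" using assms by (simp add: mult_nonpos_nonneg)
  then have "max Z 0 \<in> adm" using Eb_pos by (simp add: adm_def)
  then show "eventually (\<lambda>S. Z < s1 S) at_top"
    by (rule eventually_mono[OF s1_eventually_above]) simp
qed

text \<open>For \<open>Delta > 0\<close> the admissible set is \<open>[0, Eb / Delta)\<close> and \<open>s1\<close> fills it.\<close>
lemma s1_tendsto: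
  assumes "Delta > 0"
  shows "(s1 \<longlongrightarrow> Eb / Delta) at_top"
proof (rule order_tendstoI)
  fix a assume "a < Eb / Delta"
  then have "Delta * max a 0 < Eb" using assms Eb_pos by (simp add: field_simps)
  then have "max a 0 \<in> adm" by (simp add: adm_def)
  then show "eventually (\<lambda>S. a < s1 S) at_top"
    by (rule eventually_mono[OF s1_eventually_above]) simp
next
  fix a assume "Eb / Delta < a"
  show "eventually (\<lambda>S. s1 S < a) at_top"
    using eventually_gt_at_top[of 0]
  proof eventually_elim
    case (elim S)
    then have "s1 S < Eb / Delta"
      using s1_adm assms by (simp add: adm_def field_simps)
    then show "s1 S < a" using \<open>Eb / Delta < a\<close> by simp
  qed
qed

text \<open>For \<open>Delta < 0\<close>, \<open>s1 \<rightarrow> \<infinity>\<close> and \<open>conc0\<close> saturates, so \<open>s0\<close> has a finite limit.\<close>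
lemma s0_tendsto:
  assumes "Delta < 0"
  shows "(s0 \<longlongrightarrow> - l * Fb / Delta) at_top"
proof -
  have "((\<lambda>S. conc0 (s1 S)) \<longlongrightarrow> - l * Fb / Delta) at_top"
    using filterlim_compose[OF conc0_tendsto s1_at_top] assms by simp
  moreover have "eventually (\<lambda>S. conc0 (s1 S) = s0 S) at_top"
    using eventually_gt_at_top[of 0] by eventually_elim (simp add: s0_conc0)
  ultimately show ?thesis by (simp add: tendsto_cong)
qed

text \<open>For \<open>Delta > 0\<close>: \<open>s1\<close> and the complexes stay bounded, so \<open>s0\<close> absorbs the growth of \<open>S\<close>.\<close>
lemma s0_at_top_Delta_pos:
  assumes "Delta > 0"
  shows "filterlim s0 at_top at_top"
proof (rule filterlim_at_top_mono)
  define C where "C = Eb / Delta + (g + d) * Fb / d"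
  show "filterlim (\<lambda>S. - C + S) at_top at_top"
    by (rule filterlim_tendsto_add_at_top[OF tendsto_const filterlim_ident])
  show "eventually (\<lambda>S. - C + S \<le> s0 S) at_top"
    using eventually_gt_at_top[of 0]
  proof eventually_elim
    case (elim S)
    have x: "s1 S \<in> adm" using s1_adm elim .
    then have "s1 S < Eb / Delta" using assms by (simp add: adm_def field_simps)
    moreover have "(g + d) * Fb * (s1 S / (1 + d * s1 S)) \<le> (g + d) * Fb * (1 / d)"
      using saturating_bound x g_pos d_pos Fb_pos by (intro mult_left_mono) (simp_all add: adm_def)
    moreover have "S = s0 S + s1 S + (g + d) * Fb * s1 S / (1 + d * s1 S)"
      using s1_total[OF elim] s0_conc0[OF elim] unfolding total_def by simp
    ultimately show ?case unfolding C_def by simp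
  qed
qed

text \<open>For \<open>Delta = 0\<close>, \<open>conc0\<close> is linear, so \<open>s0\<close> is a positive multiple of \<open>s1\<close>.\<close>
lemma s0_at_top_Delta_zero:
  assumes "Delta = 0"
  shows "filterlim s0 at_top at_top"
proof (rule filterlim_at_top_mono)
  show "filterlim (\<lambda>S. l * Fb / Eb * s1 S) at_top at_top"
    using l_pos Fb_pos Eb_pos assms
    by (intro filterlim_tendsto_pos_mult_at_top[OF tendsto_const _ s1_at_top]) simp_all
  show "eventually (\<lambda>S. l * Fb / Eb * s1 S \<le> s0 S) at_top"
    using eventually_gt_at_top[of 0]
    by eventually_elim (simp add: s0_conc0 conc0_def assms)
qed

end

locale ptm_model =
  fixes a0 b0 c0 a1 b1 c1 Eb Fb :: real
  assumes rates_pos: "a0 > 0" "b0 > 0" "c0 > 0" "a1 > 0" "b1 > 0" "c1 > 0"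
    and totals_pos: "Eb > 0" "Fb > 0"

sublocale ptm_model \<subseteq> ptm_reduced "ptm_delta a1 b1 c1" "ptm_gamma c0 a1 b1 c1"
  "ptm_lambda a0 b0 c0 a1 b1 c1" Eb Fb
  using rates_pos totals_pos
  by unfold_locales (simp_all add: ptm_delta_def ptm_gamma_def ptm_lambda_def)

context ptm_model
begin

text \<open>The sign of \<open>Delta\<close> is the sign of \<open>T = c1 Fb - c0 Eb\<close>.\<close>
lemma Delta_eq_T: "Delta = (ptm_delta a1 b1 c1 / c0) * (c1 * Fb - c0 * Eb)"
  unfolding Delta_def unfolding ptm_gamma_def using rates_pos(3) by (simp add: field_simps)

text \<open>The free kinase cannot vanish, since then \<open>S1 > 0\<close> would force
  \<open>l F S1 = S0 E = 0\<close>.\<close>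
lemma bmss_reduces:
  assumes "ptm_BMSS a0 b0 c0 a1 b1 c1 Eb Fb Sb E S0 S1 F Y0 Y1"
  shows "S1 \<in> adm \<and> total S1 = Sb \<and> S0 = conc0 S1"
proof -
  let ?d = "ptm_delta a1 b1 c1" and ?g = "ptm_gamma c0 a1 b1 c1"
    and ?l = "ptm_lambda a0 b0 c0 a1 b1 c1"
  have Y0: "Y0 = ?g * F * S1" and Y1: "Y1 = ?d * F * S1" and S0E: "?l * F * S1 = S0 * E"
    and FF: "Fb = F + Y1" and EE: "Eb = E + Y0" and SS: "Sb = S0 + S1 + Y0 + Y1"
    and S1: "S1 \<ge> 0" and E0: "E \<ge> 0"
    using assms unfolding ptm_BMSS_def ptm_steady_state_def by auto
  have "Fb = F * (1 + ?d * S1)" using FF Y1 by (simp add: algebra_simps)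
  then have F: "F = free_F S1"
    unfolding free_F_def using one_plus_d_pos[OF S1] by simp
  have E: "E = free_E S1" unfolding free_E_def F[symmetric] using EE Y0 by simp
  have "E \<noteq> 0"
  proof
    assume "E = 0"
    then have "S1 > 0" using EE Y0 totals_pos S1 by (cases "S1 = 0") auto
    then have "?l * F * S1 > 0" using l_pos free_F_pos[OF S1] F by simp
    then show False using S0E \<open>E = 0\<close> by simp
  qed
  then have adm: "S1 \<in> adm" using adm_iff_free_E_pos[OF S1] E E0 by simp
  have S0: "S0 = conc0 S1"
    using S0E \<open>E \<noteq> 0\<close> unfolding conc0_free[OF S1] F[symmetric] E[symmetric]
    by (simp add: field_simps)
  have "total S1 = Sb"
    unfolding total_def complexes_free F[symmetric] using SS Y0 Y1 S0 by simp
  then show ?thesis using adm S0 by simp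
qed

lemma bmss_of_adm:
  assumes x: "x \<in> adm" and Sb: "total x = Sb" "Sb > 0"
  shows "ptm_BMSS a0 b0 c0 a1 b1 c1 Eb Fb Sb (free_E x) (conc0 x) x (free_F x)
    (ptm_gamma c0 a1 b1 c1 * free_F x * x) (ptm_delta a1 b1 c1 * free_F x * x)"
proof -
  have x0: "0 \<le> x" using x by (simp add: adm_def)
  have E: "free_E x > 0" using adm_iff_free_E_pos[OF x0] x by simp
  have F: "free_F x > 0" using free_F_pos[OF x0] .
  have "Fb = free_F x + ptm_delta a1 b1 c1 * free_F x * x"
    using free_F_scaled[OF x0] by (simp add: algebra_simps)
  moreover have "ptm_lambda a0 b0 c0 a1 b1 c1 * free_F x * x = conc0 x * free_E x"
    unfolding conc0_free[OF x0] using E by simp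
  moreover have "Sb = conc0 x + x + ptm_gamma c0 a1 b1 c1 * free_F x * x
      + ptm_delta a1 b1 c1 * free_F x * x"
    using Sb unfolding total_def complexes_free by simp
  ultimately show ?thesis
    unfolding ptm_BMSS_def ptm_steady_state_def
    using totals_pos Sb E F x0 conc0_nonneg[OF x] d_pos g_pos by (simp add: free_E_def)
qed

text \<open>Hence the BMSS values are read off from the unique admissible solution of
  \<open>total x = Sb\<close> (uniqueness because \<open>total\<close> is strictly increasing on \<open>adm\<close>).\<close>
lemma bmss_values:
  assumes x: "x \<in> adm" and Sb: "total x = Sb" "Sb > 0"
  shows "bmss_S1 a0 b0 c0 a1 b1 c1 Eb Fb Sb = x \<and> bmss_S0 a0 b0 c0 a1 b1 c1 Eb Fb Sb = conc0 x"
proof -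
  note witness = bmss_of_adm[OF assms]
  have unique: "S1 = x \<and> S0 = conc0 x"
    if "ptm_BMSS a0 b0 c0 a1 b1 c1 Eb Fb Sb E S0 S1 F Y0 Y1" for E S0 S1 F Y0 Y1
    using bmss_reduces[OF that] strict_mono_on_eqD[OF total_strict_mono _ x, of S1] Sb by auto
  show ?thesis
    unfolding bmss_S1_def bmss_S0_def
    by (intro conjI the_equality) (use witness unique in blast)+
qed

end

text \<open>Together with surjectivity of \<open>total\<close>, the BMSS values form a steady branch.\<close>
sublocale ptm_model \<subseteq> steady_branch "ptm_delta a1 b1 c1" "ptm_gamma c0 a1 b1 c1"
  "ptm_lambda a0 b0 c0 a1 b1 c1" Eb Fb "bmss_S1 a0 b0 c0 a1 b1 c1 Eb Fb"
  "bmss_S0 a0 b0 c0 a1 b1 c1 Eb Fb"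
proof
  fix S :: real assume "S > 0"
  then obtain x where "x \<in> adm" "total x = S" by (rule total_surj)
  with bmss_values[OF this \<open>S > 0\<close>]
  show "bmss_S1 a0 b0 c0 a1 b1 c1 Eb Fb S \<in> adm"
    and "total (bmss_S1 a0 b0 c0 a1 b1 c1 Eb Fb S) = S"
    and "bmss_S0 a0 b0 c0 a1 b1 c1 Eb Fb S = conc0 (bmss_S1 a0 b0 c0 a1 b1 c1 Eb Fb S)"
    by simp_all
qed

theorem mainTheorem12:
  fixes a0 b0 c0 a1 b1 c1 Eb Fb :: real
  assumes "a0 > 0" "b0 > 0" "c0 > 0" "a1 > 0" "b1 > 0" "c1 > 0"
    and "Eb > 0" "Fb > 0"
  defines "T \<equiv> c1 * Fb - c0 * Eb"
    and "\<Delta> \<equiv> ptm_gamma c0 a1 b1 c1 * Fb - ptm_delta a1 b1 c1 * Eb"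
    and "s1 \<equiv> bmss_S1 a0 b0 c0 a1 b1 c1 Eb Fb"
    and "s0 \<equiv> bmss_S0 a0 b0 c0 a1 b1 c1 Eb Fb"
  shows "\<Delta> = (ptm_delta a1 b1 c1 / c0) * T
    \<and> strict_mono_on {0<..} s1 \<and> strict_mono_on {0<..} s0
    \<and> (T < 0 \<longrightarrow> filterlim s1 at_top at_top
          \<and> - ptm_lambda a0 b0 c0 a1 b1 c1 * Fb / \<Delta> > 0
          \<and> (s0 \<longlongrightarrow> - ptm_lambda a0 b0 c0 a1 b1 c1 * Fb / \<Delta>) at_top)
    \<and> (T > 0 \<longrightarrow> (s1 \<longlongrightarrow> Eb / \<Delta>) at_top \<and> filterlim s0 at_top at_top)
    \<and> (T = 0 \<longrightarrow> filterlim s1 at_top at_top \<and> filterlim s0 at_top at_top)"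
proof -
  interpret ptm_model a0 b0 c0 a1 b1 c1 Eb Fb
    using assms(1-8) by unfold_locales
  have \<Delta>: "\<Delta> = Delta" unfolding \<Delta>_def Delta_def ..
  have "ptm_delta a1 b1 c1 / c0 > 0" using d_pos assms(3) by simp
  then have sign: "(T < 0 \<longleftrightarrow> Delta < 0) \<and> (T > 0 \<longleftrightarrow> Delta > 0) \<and> (T = 0 \<longleftrightarrow> Delta = 0)"
    unfolding Delta_eq_T T_def[symmetric]
    by (metis mult_less_0_iff zero_less_mult_iff mult_eq_0_iff order_less_asym order_less_irrefl)
  have "Delta < 0 \<Longrightarrow> - ptm_lambda a0 b0 c0 a1 b1 c1 * Fb / Delta > 0"
    using l_pos totals_pos by (simp add: divide_pos_neg)
  with sign show ?thesis
    unfolding s1_def s0_def \<Delta> T_def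
    using Delta_eq_T s1_strict_mono s0_strict_mono s1_at_top s1_tendsto s0_tendsto
      s0_at_top_Delta_pos s0_at_top_Delta_zero
    by simp
qed

end
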